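(* If $|D|\ge 2n^2$, then at least a fraction $1/e$ of all inputs in $(D\times D)^n$ belong to $EB^{-1}(1)$.
   Context: $D$ is a finite domain. Two elements $x=(x_1,x_2)$ and $y=(y_1,y_2)$ of $D\times D$ are bidistinct if $x_1\ne y_2$ and $x_2\ne y_1$. The element bidistinctness function $EB:(D\times D)^n\to\{0,1\}$ equals $1$ iff for every pair of indices $1\le i,j\le n$ the $i$-th and $j$-th pairs of the input are bidistinct. *)

theory Defs
  imports Complex_Main
begin

definition bidistinct :: "'a \<times> 'a \<Rightarrow> 'a \<times> 'a \<Rightarrow> bool" where
  "bidistinct x y \<longleftrightarrow> fst x \<noteq> snd y \<and> snd x \<noteq> fst y"

text \<open>Inputs in (D x D)^n are represented as lists of length n with entries in D x D;
  the i-th pair is xs ! i (0-based).\<close>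
definition EB :: "('a \<times> 'a) list \<Rightarrow> nat" where
  "EB xs = (if \<forall>i<length xs. \<forall>j<length xs. bidistinct (xs ! i) (xs ! j) then 1 else 0)"

definition inputs :: "'a set \<Rightarrow> nat \<Rightarrow> ('a \<times> 'a) list set" where
  "inputs D n = {xs. length xs = n \<and> set xs \<subseteq> D \<times> D}"

end

theory Submission
  imports Defs
begin

text \<open>An input is accepted iff no first coordinate equals a second coordinate. Appending a pair
  (a, b) to an accepted input of length k keeps it accepted as soon as a avoids the k second
  coordinates, b avoids the k first coordinates and a \<noteq> b; with N = card D there are at least
  N^2 - (2k + 1) N such pairs. Hence at least N^(2n) (1 - 1/N) (1 - 3/N) ... (1 - (2n - 1)/N)
  \<ge> N^(2n) (1 - n^2/N) inputs of length n are accepted, a fraction of at least 1/2 \<ge> 1/e of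
  all N^(2n) inputs when 2 n^2 \<le> N.\<close>

lemma EB_eq_1_iff: "EB xs = 1 \<longleftrightarrow> fst ` set xs \<inter> snd ` set xs = {}"
proof -
  have "(\<forall>i<length xs. \<forall>j<length xs. bidistinct (xs ! i) (xs ! j))
        \<longleftrightarrow> (\<forall>a\<in>set xs. \<forall>b\<in>set xs. bidistinct a b)"
    by (metis in_set_conv_nth)
  also have "\<dots> \<longleftrightarrow> fst ` set xs \<inter> snd ` set xs = {}"
    unfolding bidistinct_def by fastforce
  finally show ?thesis
    unfolding EB_def by simp
qed

lemma card_inputs:
  assumes "finite D"
  shows "card (inputs D n) = card D ^ (2 * n)"
proof -
  have "inputs D n = {xs. set xs \<subseteq> D \<times> D \<and> length xs = n}"
    by (auto simp: inputs_def)
  with assms show ?thesis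
    by (simp add: card_lists_length_eq card_cartesian_product power_mult power2_eq_square)
qed

definition accepted :: "'a set \<Rightarrow> nat \<Rightarrow> ('a \<times> 'a) list set" where
  "accepted D n = {xs \<in> inputs D n. fst ` set xs \<inter> snd ` set xs = {}}"

lemma finite_accepted: "finite D \<Longrightarrow> finite (accepted D n)"
  using finite_lists_length_eq[of "D \<times> D" n]
  by (auto simp: accepted_def inputs_def elim: finite_subset[rotated])

lemma accepted_0: "accepted D 0 = {[]}"
  by (auto simp: accepted_def inputs_def)

definition extensions :: "'a set \<Rightarrow> ('a \<times> 'a) list \<Rightarrow> ('a \<times> 'a) set" where
  "extensions D xs = (D - snd ` set xs) \<times> (D - fst ` set xs) - Id"

lemma append_extension_accepted:
  assumes "xs \<in> accepted D n" and "p \<in> extensions D xs"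
  shows "xs @ [p] \<in> accepted D (Suc n)"
  using assms by (auto simp: accepted_def inputs_def extensions_def) force+

lemma card_extensions_ge:
  assumes "finite D" and "length xs = n"
  shows "real (card D) ^ 2 - (2 * real n + 1) * card D \<le> card (extensions D xs)"
proof (cases "n \<le> card D")
  case False
  then have "real (card D) ^ 2 \<le> real n * real (card D)"
    by (simp add: power2_eq_square mult_right_mono)
  moreover have "0 \<le> real n * real (card D)" "0 \<le> real (card (extensions D xs))"
    by simp_all
  ultimately show ?thesis
    unfolding distrib_right mult.assoc by linarith
next
  case True
  let ?S = "D - snd ` set xs" and ?T = "D - fst ` set xs"
  have "card (fst ` set xs) \<le> n" "card (snd ` set xs) \<le> n"
    using assms(2) by (metis card_image_le card_length finite_set le_trans)+
  then have "card D - n \<le> card ?S" "card D - n \<le> card ?T"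
    using diff_card_le_card_Diff[of _ D] by (metis diff_le_mono2 le_trans finite_set finite_imageI)+
  then have "(card D - n) * (card D - n) \<le> card (?S \<times> ?T)"
    by (simp add: card_cartesian_product mult_le_mono)
  moreover have "?S \<times> ?T - Id = ?S \<times> ?T - (\<lambda>a. (a, a)) ` D"
    by auto
  moreover have "card ((\<lambda>a. (a, a)) ` D) = card D"
    by (simp add: card_image inj_on_def)
  ultimately have "(card D - n) * (card D - n) - card D \<le> card (extensions D xs)"
    using diff_card_le_card_Diff[of "(\<lambda>a. (a, a)) ` D" "?S \<times> ?T"] assms(1)
    unfolding extensions_def by simp
  then have "real ((card D - n) * (card D - n)) - card D \<le> card (extensions D xs)"
    by linarith
  then have "(real (card D) - n) ^ 2 - card D \<le> card (extensions D xs)"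
    using True by (simp add: power2_eq_square of_nat_diff)
  moreover have "(real (card D) - n) ^ 2 - card D
                   = real (card D) ^ 2 - (2 * real n + 1) * card D + real n ^ 2"
    by (simp add: power2_diff algebra_simps)
  ultimately show ?thesis
    using zero_le_power2[of "real n"] by linarith
qed

lemma card_accepted_Suc_ge:
  assumes "finite D"
  shows "card (accepted D n) * (real (card D) ^ 2 - (2 * real n + 1) * card D)
           \<le> card (accepted D (Suc n))"
proof -
  let ?Ext = "Sigma (accepted D n) (extensions D)"
  have "card (accepted D n) * (real (card D) ^ 2 - (2 * real n + 1) * card D)
          = (\<Sum>xs\<in>accepted D n. real (card D) ^ 2 - (2 * real n + 1) * card D)"
    by simp
  also have "\<dots> \<le> (\<Sum>xs\<in>accepted D n. real (card (extensions D xs)))"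
    by (rule sum_mono) (simp add: card_extensions_ge[OF assms] accepted_def inputs_def)
  also have "\<dots> = card ?Ext"
    using assms finite_accepted[OF assms] by (simp add: card_SigmaI extensions_def)
  also have "card ?Ext \<le> card (accepted D (Suc n))"
    by (rule card_inj_on_le[where f = "\<lambda>(xs, p). xs @ [p]"])
       (auto simp: inj_on_def append_extension_accepted finite_accepted[OF assms])
  finally show ?thesis
    by simp
qed

lemma one_minus_add_le_mult:
  fixes x y :: "'a :: {ordered_ring, ring_1}"
  assumes "0 \<le> x * y"
  shows "1 - (x + y) \<le> (1 - x) * (1 - y)"
  using assms by (simp add: algebra_simps)

lemma card_accepted_ge:
  assumes "finite D" and "n ^ 2 \<le> card D"
  shows "real (card D) ^ (2 * n) * (1 - real n ^ 2 / card D) \<le> card (accepted D n)"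
  using assms(2)
proof (induction n)
  case 0
  show ?case
    by (simp add: accepted_0)
next
  case (Suc n)
  let ?N = "real (card D)"
  have "real (Suc n ^ 2) \<le> ?N"
    using Suc.prems by (simp only: of_nat_le_iff)
  then have Suc_sq: "real n ^ 2 + (2 * real n + 1) \<le> ?N"
    by (simp add: power2_eq_square algebra_simps)
  then have "2 * real n + 1 \<le> ?N"
    using zero_le_power2[of "real n"] by linarith
  then have "?N > 0"
    using of_nat_0_le_iff[of n] by linarith
  then have step_nonneg: "?N ^ 2 - (2 * real n + 1) * ?N \<ge> 0"
    using \<open>2 * real n + 1 \<le> ?N\<close>
    by (simp add: power2_eq_square zero_le_mult_iff flip: left_diff_distrib)
  have "?N ^ (2 * Suc n) * (1 - real (Suc n) ^ 2 / ?N)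
          = ?N ^ (2 * Suc n) * (1 - (real n ^ 2 / ?N + (2 * real n + 1) / ?N))"
    by (simp add: power2_eq_square algebra_simps flip: add_divide_distrib)
  also have "\<dots> \<le> ?N ^ (2 * Suc n) * ((1 - real n ^ 2 / ?N) * (1 - (2 * real n + 1) / ?N))"
    using \<open>?N > 0\<close> by (intro mult_left_mono one_minus_add_le_mult) simp_all
  also have "\<dots> = ?N ^ (2 * n) * (1 - real n ^ 2 / ?N) * (?N ^ 2 - (2 * real n + 1) * ?N)"
    using \<open>?N > 0\<close> by (simp add: field_simps power2_eq_square)
  also have "\<dots> \<le> card (accepted D n) * (?N ^ 2 - (2 * real n + 1) * ?N)"
    using Suc.IH Suc_sq step_nonneg by (intro mult_right_mono) (simp_all flip: of_nat_power)
  also have "\<dots> \<le> card (accepted D (Suc n))"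
    by (rule card_accepted_Suc_ge[OF assms(1)])
  finally show ?case .
qed

lemma exp_minus_one_le_half: "exp (-1 :: real) \<le> 1 / 2"
  using exp_ge_add_one_self[of "1 :: real"] by (simp add: exp_minus field_simps)

theorem lemma9:
  fixes D :: "'a set" and n :: nat
  assumes "finite D"
    and "card D \<ge> 2 * n ^ 2"
  shows "real (card {xs \<in> inputs D n. EB xs = 1}) \<ge> exp (-1) * real (card (inputs D n))"
proof -
  have "real n ^ 2 / card D \<le> 1 / 2"
    using assms(2) by (cases "card D = 0") (simp_all add: field_simps flip: of_nat_power)
  then have fraction: "exp (-1) \<le> 1 - real n ^ 2 / card D"
    using exp_minus_one_le_half by linarith
  have "exp (-1) * real (card (inputs D n)) \<le> real (card D) ^ (2 * n) * (1 - real n ^ 2 / card D)"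
    using mult_left_mono[OF fraction, of "real (card D) ^ (2 * n)"]
    by (simp add: card_inputs[OF assms(1)] mult.commute)
  also have "\<dots> \<le> card (accepted D n)"
    using assms by (intro card_accepted_ge) simp_all
  also have "accepted D n = {xs \<in> inputs D n. EB xs = 1}"
    unfolding accepted_def by (simp only: EB_eq_1_iff)
  finally show ?thesis .
qed

end
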